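(* Let $\lambda>0$ and $\rho_1,\rho_2\in(0,1)$ with $\rho_1+\rho_2=1$. For an entropy generator $\psi$ consider the condition $$\sum_{j=1}^2\psi''\Big(\frac{u_j}{\rho_j}\Big)\frac1{\rho_j}(\rho_j-u_j)^2\ \ge\ \frac{\mu}{2\lambda}\sum_{j=1}^2\psi'\Big(\frac{u_j}{\rho_j}\Big)(u_j-\rho_j)\quad\text{for all }u\in[0,1]^2,\ u_1+u_2=1.$$ This condition holds with $$1\ge\frac{\mu}{2\lambda}=\begin{cases}1 & \text{for }\psi=\psi_2,\\ 2\min\{\rho_1,\rho_2\} & \text{for }\psi=\psi_3,\\ 2-2\sqrt{1-3\rho_2(1-\rho_2)}>0 & \text{for }\psi=\psi_4.\end{cases}$$
   Context: For $p>1$, $\psi_p(\sigma)=\sigma^p-1-p(\sigma-1)$ on $\sigma\ge0$. *)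

theory Defs
  imports "HOL-Analysis.Analysis"
begin

text \<open>Entropy generator psi_p(s) = s^p - 1 - p(s - 1); only integer p (2,3,4) are needed.
  It is a polynomial, so we take it on all of the reals; derivatives are the usual ones.\<close>
definition psi :: "nat \<Rightarrow> real \<Rightarrow> real" where
  "psi p s = s ^ p - 1 - real p * (s - 1)"

definition entropy_cond :: "(real \<Rightarrow> real) \<Rightarrow> real \<Rightarrow> real \<Rightarrow> real \<Rightarrow> real \<Rightarrow> bool" where
  "entropy_cond \<psi> \<rho>1 \<rho>2 \<mu> lam \<longleftrightarrow>
    (\<forall>u1 u2. 0 \<le> u1 \<and> u1 \<le> 1 \<and> 0 \<le> u2 \<and> u2 \<le> 1 \<and> u1 + u2 = 1 \<longrightarrow>
      deriv (deriv \<psi>) (u1 / \<rho>1) * (1 / \<rho>1) * (\<rho>1 - u1)^2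
      + deriv (deriv \<psi>) (u2 / \<rho>2) * (1 / \<rho>2) * (\<rho>2 - u2)^2
      \<ge> \<mu> / (2 * lam) * (deriv \<psi> (u1 / \<rho>1) * (u1 - \<rho>1) + deriv \<psi> (u2 / \<rho>2) * (u2 - \<rho>2)))"

end

(*
  With s = u1/rho1 and t = u2/rho2 the constraint u1 + u2 = 1 reads rho1 s + rho2 t = 1, so
  s - 1 = rho2 (s - t) and t - 1 = -rho1 (s - t). Both sides of the entropy condition then
  carry the factor rho1 rho2 (s - t), and since psi_p'(s) - psi_p'(t) = p (s^(p-1) - t^(p-1)),
  for psi_p the condition becomes c h(s, t) <= (p - 1) (rho2 s^(p-2) + rho1 t^(p-2)) on s, t >= 0,
  where c = mu/(2 lambda) and h is the complete homogeneous polynomial of degree p - 2.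
  For p = 2 this is c <= 1; for p = 3 it is linear in (s, t), with both coefficients
  nonnegative iff c <= 2 min rho1 rho2; for p = 4 it is a binary quadratic form whose
  discriminant vanishes exactly at c = 2 - 2 sqrt (1 - 3 rho1 rho2).
*)
theory Submission
  imports Defs
begin

lemma deriv_psi: "deriv (psi p) x = real p * x ^ (p - 1) - real p"
  unfolding psi_def by (rule DERIV_imp_deriv) (auto intro!: derivative_eq_intros)

lemma deriv2_psi: "deriv (deriv (psi p)) x = real p * (real (p - 1) * x ^ (p - 2))"
proof -
  have "deriv (psi p) = (\<lambda>x. real p * x ^ (p - 1) - real p)"
    by (rule ext) (rule deriv_psi)
  then show ?thesis
    by (simp only:) (rule DERIV_imp_deriv, auto intro!: derivative_eq_intros simp: numeral_2_eq_2)
qed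

lemma entropy_condI:
  fixes \<psi> :: "real \<Rightarrow> real"
  assumes "0 < \<rho>1" "0 < \<rho>2" "\<rho>1 + \<rho>2 = 1"
    and reduced: "\<And>s t. 0 \<le> s \<Longrightarrow> 0 \<le> t \<Longrightarrow> \<rho>1 * s + \<rho>2 * t = 1 \<Longrightarrow>
      \<mu> / (2 * lam) * ((s - t) * (deriv \<psi> s - deriv \<psi> t))
        \<le> (s - t)\<^sup>2 * (\<rho>2 * deriv (deriv \<psi>) s + \<rho>1 * deriv (deriv \<psi>) t)"
  shows "entropy_cond \<psi> \<rho>1 \<rho>2 \<mu> lam"
  unfolding entropy_cond_def
proof (intro allI impI, elim conjE)
  fix u1 u2 :: real
  assume "0 \<le> u1" "u1 \<le> 1" "0 \<le> u2" "u2 \<le> 1" "u1 + u2 = 1"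
  define s t where "s = u1 / \<rho>1" and "t = u2 / \<rho>2"
  have u1: "u1 = \<rho>1 * s" and u2: "u2 = \<rho>2 * t"
    using assms(1,2) by (simp_all add: s_def t_def)
  have "0 \<le> s" "0 \<le> t" "\<rho>1 * s + \<rho>2 * t = 1"
    using assms(1,2) \<open>0 \<le> u1\<close> \<open>0 \<le> u2\<close> \<open>u1 + u2 = 1\<close> by (simp_all add: s_def t_def)
  note reduced = reduced[OF this]
  have s1: "s - 1 = \<rho>2 * (s - t)" and t1: "t - 1 = - (\<rho>1 * (s - t))"
    using \<open>\<rho>1 * s + \<rho>2 * t = 1\<close> assms(3) by algebra+
  have lhs: "deriv (deriv \<psi>) s * (1 / \<rho>1) * (\<rho>1 - u1)\<^sup>2 + deriv (deriv \<psi>) t * (1 / \<rho>2) * (\<rho>2 - u2)\<^sup>2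
      = \<rho>1 * \<rho>2 * ((s - t)\<^sup>2 * (\<rho>2 * deriv (deriv \<psi>) s + \<rho>1 * deriv (deriv \<psi>) t))"
  proof -
    have "\<rho>1 - u1 = - (\<rho>1 * \<rho>2 * (s - t))" "\<rho>2 - u2 = \<rho>1 * \<rho>2 * (s - t)"
      using s1 t1 unfolding u1 u2 by algebra+
    with assms(1,2) show ?thesis
      by (simp only:) (simp add: field_simps power2_eq_square)
  qed
  have rhs: "deriv \<psi> s * (u1 - \<rho>1) + deriv \<psi> t * (u2 - \<rho>2)
      = \<rho>1 * \<rho>2 * ((s - t) * (deriv \<psi> s - deriv \<psi> t))"
    using s1 t1 unfolding u1 u2 by algebra
  have "\<rho>1 * \<rho>2 * (\<mu> / (2 * lam) * ((s - t) * (deriv \<psi> s - deriv \<psi> t)))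
      \<le> \<rho>1 * \<rho>2 * ((s - t)\<^sup>2 * (\<rho>2 * deriv (deriv \<psi>) s + \<rho>1 * deriv (deriv \<psi>) t))"
    using assms(1,2) by (intro mult_left_mono[OF reduced]) simp
  then show "\<mu> / (2 * lam) * (deriv \<psi> (u1 / \<rho>1) * (u1 - \<rho>1) + deriv \<psi> (u2 / \<rho>2) * (u2 - \<rho>2))
      \<le> deriv (deriv \<psi>) (u1 / \<rho>1) * (1 / \<rho>1) * (\<rho>1 - u1)\<^sup>2
        + deriv (deriv \<psi>) (u2 / \<rho>2) * (1 / \<rho>2) * (\<rho>2 - u2)\<^sup>2"
    unfolding s_def[symmetric] t_def[symmetric] lhs rhs by (simp add: mult_ac)
qed

lemma entropy_cond_psiI:
  assumes "0 < \<rho>1" "0 < \<rho>2" "\<rho>1 + \<rho>2 = 1"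
    and reduced: "\<And>s t. 0 \<le> s \<Longrightarrow> 0 \<le> t \<Longrightarrow>
      \<mu> / (2 * lam) * (\<Sum>i<p - 1. t ^ (p - 1 - Suc i) * s ^ i)
        \<le> real (p - 1) * (\<rho>2 * s ^ (p - 2) + \<rho>1 * t ^ (p - 2))"
  shows "entropy_cond (psi p) \<rho>1 \<rho>2 \<mu> lam"
proof (rule entropy_condI[OF assms(1-3)])
  fix s t :: real
  assume "0 \<le> s" "0 \<le> t"
  define H where "H = (\<Sum>i<p - 1. t ^ (p - 1 - Suc i) * s ^ i)"
  have "deriv (psi p) s - deriv (psi p) t = real p * (s ^ (p - 1) - t ^ (p - 1))"
    by (simp add: deriv_psi right_diff_distrib)
  also have "\<dots> = real p * ((s - t) * H)"
    by (simp only: H_def power_diff_sumr2)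
  finally have "\<mu> / (2 * lam) * ((s - t) * (deriv (psi p) s - deriv (psi p) t))
      = real p * (s - t)\<^sup>2 * (\<mu> / (2 * lam) * H)"
    by (simp add: power2_eq_square mult_ac)
  also have "\<dots> \<le> real p * (s - t)\<^sup>2 * (real (p - 1) * (\<rho>2 * s ^ (p - 2) + \<rho>1 * t ^ (p - 2)))"
    unfolding H_def by (intro mult_left_mono reduced \<open>0 \<le> s\<close> \<open>0 \<le> t\<close>) simp
  also have "\<dots> = (s - t)\<^sup>2 * (\<rho>2 * deriv (deriv (psi p)) s + \<rho>1 * deriv (deriv (psi p)) t)"
    by (simp add: deriv2_psi algebra_simps)
  finally show "\<mu> / (2 * lam) * ((s - t) * (deriv (psi p) s - deriv (psi p) t))
      \<le> (s - t)\<^sup>2 * (\<rho>2 * deriv (deriv (psi p)) s + \<rho>1 * deriv (deriv (psi p)) t)" .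
qed

lemma entropy_cond_psi2:
  assumes "0 < \<rho>1" "0 < \<rho>2" "\<rho>1 + \<rho>2 = 1" "\<mu> / (2 * lam) \<le> 1"
  shows "entropy_cond (psi 2) \<rho>1 \<rho>2 \<mu> lam"
  by (rule entropy_cond_psiI[OF assms(1-3)]) (use assms in simp)

lemma entropy_cond_psi3:
  assumes "0 < \<rho>1" "0 < \<rho>2" "\<rho>1 + \<rho>2 = 1" "\<mu> / (2 * lam) \<le> 2 * min \<rho>1 \<rho>2"
  shows "entropy_cond (psi 3) \<rho>1 \<rho>2 \<mu> lam"
proof (rule entropy_cond_psiI[OF assms(1-3)])
  fix s t :: real
  assume "0 \<le> s" "0 \<le> t"
  have "\<mu> / (2 * lam) \<le> 2 * \<rho>2" "\<mu> / (2 * lam) \<le> 2 * \<rho>1"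
    using assms(4) by simp_all
  then have "\<mu> / (2 * lam) * s \<le> 2 * \<rho>2 * s" "\<mu> / (2 * lam) * t \<le> 2 * \<rho>1 * t"
    using \<open>0 \<le> s\<close> \<open>0 \<le> t\<close> by (metis mult_right_mono)+
  then show "\<mu> / (2 * lam) * (\<Sum>i<3 - 1. t ^ (3 - 1 - Suc i) * s ^ i)
      \<le> real (3 - 1) * (\<rho>2 * s ^ (3 - 2) + \<rho>1 * t ^ (3 - 2))"
    by (simp add: numeral_eq_Suc distrib_left)
qed

lemma quadratic_form_nonneg:
  fixes a b c x y :: real
  assumes "0 \<le> a" "0 \<le> c" "b\<^sup>2 \<le> 4 * a * c"
  shows "0 \<le> a * x\<^sup>2 + b * x * y + c * y\<^sup>2"
proof (cases "a = 0")
  case True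
  with assms(3) have "b = 0" by simp
  with True assms(2) show ?thesis by simp
next
  case False
  have "4 * a * (a * x\<^sup>2 + b * x * y + c * y\<^sup>2) = (2 * a * x + b * y)\<^sup>2 + (4 * a * c - b\<^sup>2) * y\<^sup>2"
    by (simp add: power2_eq_square algebra_simps)
  also have "\<dots> \<ge> 0"
    using assms(3) by simp
  finally show ?thesis
    using assms(1) False by (simp add: zero_le_mult_iff)
qed

lemma entropy_radicand_ge: "1 / 4 \<le> 1 - 3 * r * (1 - r :: real)"
  using zero_le_power2[of "2 * r - 1"] by (simp add: power2_eq_square algebra_simps)

lemma sqrt_entropy_radicand_bounds:
  fixes r :: real
  assumes "0 < r" "r < 1"
  shows "1 / 2 \<le> sqrt (1 - 3 * r * (1 - r))" "sqrt (1 - 3 * r * (1 - r)) < 1"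
proof -
  have "sqrt (1 / 4) \<le> sqrt (1 - 3 * r * (1 - r))"
    using entropy_radicand_ge by (rule real_sqrt_le_mono)
  then show "1 / 2 \<le> sqrt (1 - 3 * r * (1 - r))"
    by (simp add: real_sqrt_divide)
  show "sqrt (1 - 3 * r * (1 - r)) < 1"
    using assms by simp
qed

lemma entropy_cond_psi4:
  assumes "0 < \<rho>1" "0 < \<rho>2" "\<rho>1 + \<rho>2 = 1"
    and "\<mu> / (2 * lam) \<le> 2 - 2 * sqrt (1 - 3 * \<rho>2 * (1 - \<rho>2))"
  shows "entropy_cond (psi 4) \<rho>1 \<rho>2 \<mu> lam"
proof (rule entropy_cond_psiI[OF assms(1-3)])
  define q where "q = sqrt (1 - 3 * \<rho>2 * (1 - \<rho>2))"
  define c where "c = 2 - 2 * q"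
  have "1 / 2 \<le> q"
    unfolding q_def using assms(1-3) by (intro sqrt_entropy_radicand_bounds) auto
  have q2: "q\<^sup>2 = 1 - 3 * \<rho>2 * (1 - \<rho>2)"
    unfolding q_def using entropy_radicand_ge[of \<rho>2] by simp
  have q2': "q\<^sup>2 = 1 - 3 * \<rho>1 * (1 - \<rho>1)"
    using q2 assms(3) by algebra
  have "(2 * q)\<^sup>2 = (2 - 3 * \<rho>2)\<^sup>2 + 3 * \<rho>2\<^sup>2"
    unfolding power_mult_distrib q2 by algebra
  then have "2 - 3 * \<rho>2 \<le> 2 * q"
    using \<open>1 / 2 \<le> q\<close> by - (rule power2_le_imp_le, simp_all)
  then have coeff_s: "0 \<le> 3 * \<rho>2 - c"
    unfolding c_def by simp
  have "(2 * q)\<^sup>2 = (2 - 3 * \<rho>1)\<^sup>2 + 3 * \<rho>1\<^sup>2"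
    unfolding power_mult_distrib q2' by algebra
  then have "2 - 3 * \<rho>1 \<le> 2 * q"
    using \<open>1 / 2 \<le> q\<close> by - (rule power2_le_imp_le, simp_all)
  then have coeff_t: "0 \<le> 3 * \<rho>1 - c"
    unfolding c_def by simp
  have discr: "(- c)\<^sup>2 = 4 * (3 * \<rho>2 - c) * (3 * \<rho>1 - c)"
    using q2 assms(3) unfolding c_def by algebra
  have form: "0 \<le> (3 * \<rho>2 - c) * x\<^sup>2 + (- c) * x * y + (3 * \<rho>1 - c) * y\<^sup>2" for x y
    using coeff_s coeff_t discr by (intro quadratic_form_nonneg) simp_all
  fix s t :: real
  assume "0 \<le> s" "0 \<le> t"
  have "\<mu> / (2 * lam) * (t\<^sup>2 + t * s + s\<^sup>2) \<le> c * (t\<^sup>2 + t * s + s\<^sup>2)"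
    using assms(4) \<open>0 \<le> s\<close> \<open>0 \<le> t\<close> unfolding c_def q_def by (intro mult_right_mono) simp_all
  also have "\<dots> \<le> 3 * (\<rho>2 * s\<^sup>2 + \<rho>1 * t\<^sup>2)"
    using form[of s t] by (simp add: algebra_simps)
  finally show "\<mu> / (2 * lam) * (\<Sum>i<4 - 1. t ^ (4 - 1 - Suc i) * s ^ i)
      \<le> real (4 - 1) * (\<rho>2 * s ^ (4 - 2) + \<rho>1 * t ^ (4 - 2))"
    by (simp add: numeral_eq_Suc power2_eq_square algebra_simps)
qed

theorem lemma1:
  fixes lam \<rho>1 \<rho>2 \<mu> :: real
  assumes "lam > 0" and "0 < \<rho>1" and "\<rho>1 < 1" and "0 < \<rho>2" and "\<rho>2 < 1"
    and "\<rho>1 + \<rho>2 = 1"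
  shows "(\<mu> / (2 * lam) = 1 \<longrightarrow> entropy_cond (psi 2) \<rho>1 \<rho>2 \<mu> lam)
    \<and> (\<mu> / (2 * lam) = 2 * min \<rho>1 \<rho>2 \<longrightarrow> entropy_cond (psi 3) \<rho>1 \<rho>2 \<mu> lam)
    \<and> (\<mu> / (2 * lam) = 2 - 2 * sqrt (1 - 3 * \<rho>2 * (1 - \<rho>2))
         \<longrightarrow> entropy_cond (psi 4) \<rho>1 \<rho>2 \<mu> lam)
    \<and> 2 * min \<rho>1 \<rho>2 \<le> 1
    \<and> 2 - 2 * sqrt (1 - 3 * \<rho>2 * (1 - \<rho>2)) \<le> 1
    \<and> 2 - 2 * sqrt (1 - 3 * \<rho>2 * (1 - \<rho>2)) > 0"
proof (intro conjI impI)
  note \<rho> = assms(2,4,6)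
  show "entropy_cond (psi 2) \<rho>1 \<rho>2 \<mu> lam" if "\<mu> / (2 * lam) = 1"
    using \<rho> that by (intro entropy_cond_psi2) simp_all
  show "entropy_cond (psi 3) \<rho>1 \<rho>2 \<mu> lam" if "\<mu> / (2 * lam) = 2 * min \<rho>1 \<rho>2"
    using \<rho> that by (intro entropy_cond_psi3) simp_all
  show "entropy_cond (psi 4) \<rho>1 \<rho>2 \<mu> lam"
    if "\<mu> / (2 * lam) = 2 - 2 * sqrt (1 - 3 * \<rho>2 * (1 - \<rho>2))"
    using \<rho> that by (intro entropy_cond_psi4) simp_all
  show "2 * min \<rho>1 \<rho>2 \<le> 1"
    using assms(6) by linarith
  show "2 - 2 * sqrt (1 - 3 * \<rho>2 * (1 - \<rho>2)) \<le> 1" "2 - 2 * sqrt (1 - 3 * \<rho>2 * (1 - \<rho>2)) > 0"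
    using sqrt_entropy_radicand_bounds[OF assms(4,5)] by simp_all
qed

end
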